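(* Let $\alpha$ be a nonzero real number. Every closed $\alpha$-stationary curve in $\mathbb H^2$ (not passing through $N$) is a circle centered at $N$.
   Context: Let $\langle x,y\rangle_\epsilon=x_1y_1+x_2y_2-x_3y_3$ be the Lorentzian inner product on $\mathbb R^3$ and $|x|_\epsilon=\sqrt{|\langle x,x\rangle_\epsilon|}$. The hyperbolic plane is $\mathbb H^2=\{(x,y,z):x^2+y^2-z^2=-1,\ z>0\}$ with the induced metric. It is parametrized by $\Psi(u,v)=(\sinh u\cos v,\sinh u\sin v,\cosh u)$, and $N=(0,0,1)$. The hyperbolic distance from $\Psi(u,v)$ to $N$ is $u$. For a regular curve $\gamma(t)=\Psi(u(t),v(t))$ with $u>0$, the energy is $$E_\alpha[\gamma]=\int_\gamma\mathsf d^\alpha\,ds=\int u^\alpha\sqrt{u'^2+\sinh^2(u)v'^2}\,dt,$$ where $\mathsf d$ is the hyperbolic distance to $N$. The curve is $\alpha$-stationary if it is a critical point of $E_\alpha$ (i.e. $(u,v)$ satisfies the Euler–Lagrange equations). Equivalently, its geodesic curvature satisfies $\kappa=\alpha\langle\mathbf n,\xi\rangle_\epsilon/\mathsf d$. Here $\mathbf n$ is the unit normal and $\xi=\Psi_u$ is the unit tangent of the geodesic ray from $N$ through the point. Throughout the paper, $\alpha\ne0$ and curves avoid $N$. *)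

theory Defs
  imports "HOL-Analysis.Analysis"
begin

text \<open>Polar parametrization of the hyperboloid model of the hyperbolic plane:
  Psi u v = (sinh u cos v, sinh u sin v, cosh u); the distance to N = (0,0,1) is u.\<close>
definition Psi :: "real \<Rightarrow> real \<Rightarrow> real \<times> real \<times> real" where
  "Psi u v = (sinh u * cos v, sinh u * sin v, cosh u)"

text \<open>Speed squared of t \<mapsto> Psi (u t) (v t) in the induced metric.\<close>
definition speed2 :: "(real \<Rightarrow> real) \<Rightarrow> (real \<Rightarrow> real) \<Rightarrow> (real \<Rightarrow> real) \<Rightarrow> real \<Rightarrow> real" where
  "speed2 u u' v' t = (u' t)^2 + (sinh (u t))^2 * (v' t)^2"

definition regular_polar_curve ::
  "(real \<Rightarrow> real) \<Rightarrow> (real \<Rightarrow> real) \<Rightarrow> (real \<Rightarrow> real) \<Rightarrow> (real \<Rightarrow> real)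
   \<Rightarrow> (real \<Rightarrow> real) \<Rightarrow> (real \<Rightarrow> real) \<Rightarrow> bool" where
  "regular_polar_curve u v u' v' u'' v'' \<longleftrightarrow>
     (\<forall>t. (u has_real_derivative u' t) (at t) \<and> (v has_real_derivative v' t) (at t) \<and>
          (u' has_real_derivative u'' t) (at t) \<and> (v' has_real_derivative v'' t) (at t) \<and>
          u t > 0 \<and> speed2 u u' v' t > 0)"

text \<open>Euler--Lagrange equations of E_alpha with Lagrangian
  L(u,v,u',v') = u^alpha * sqrt(u'^2 + sinh(u)^2 v'^2):
  d/dt (dL/du') = dL/du  and  d/dt (dL/dv') = dL/dv = 0.\<close>
definition alpha_stationary ::
  "real \<Rightarrow> (real \<Rightarrow> real) \<Rightarrow> (real \<Rightarrow> real) \<Rightarrow> (real \<Rightarrow> real) \<Rightarrow> (real \<Rightarrow> real) \<Rightarrow> bool" where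
  "alpha_stationary \<alpha> u v u' v' \<longleftrightarrow>
     (\<forall>t.
       ((\<lambda>s. u s powr \<alpha> * u' s / sqrt (speed2 u u' v' s)) has_real_derivative
          (\<alpha> * u t powr (\<alpha> - 1) * sqrt (speed2 u u' v' t)
           + u t powr \<alpha> * sinh (u t) * cosh (u t) * (v' t)^2 / sqrt (speed2 u u' v' t))) (at t)
     \<and> ((\<lambda>s. u s powr \<alpha> * (sinh (u s))^2 * v' s / sqrt (speed2 u u' v' s)) has_real_derivative 0) (at t))"

definition closed_polar_curve :: "(real \<Rightarrow> real) \<Rightarrow> (real \<Rightarrow> real) \<Rightarrow> bool" where
  "closed_polar_curve u v \<longleftrightarrow>
     (\<exists>T>0. \<forall>t. Psi (u (t + T)) (v (t + T)) = Psi (u t) (v t))"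

end

theory Submission
  imports Defs
begin

text \<open>The second Euler--Lagrange equation says that the momentum conjugate to the angle,
  C = u^\<alpha> sinh^2 u v' / |\<gamma>'|, is constant along the curve (a Clairaut integral).
  Always |C| \<le> g u with g r = r^\<alpha> sinh r, with equality where u' = 0, in particular at the
  minimum and the maximum of the radius u of a closed curve. Since r coth r is increasing, g has
  at most one critical point on (0, \<infinity>), a minimum; so if min u < max u, then g dips strictly
  below the common value g (min u) = g (max u) = |C| somewhere in between, and by the
  intermediate value theorem u attains such a radius, contradicting |C| \<le> g u.
  The argument never uses \<alpha> \<noteq> 0.\<close>

lemma less_sinh_mult_cosh:
  fixes x :: real
  assumes "0 < x"
  shows "x < sinh x * cosh x"
proof -
  have "sinh 0 * cosh 0 - 0 < sinh x * cosh x - x"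
  proof (rule DERIV_pos_imp_increasing_open[OF assms])
    fix y :: real assume "0 < y"
    have "((\<lambda>t. sinh t * cosh t - t) has_real_derivative
            cosh y * cosh y + sinh y * sinh y - 1) (at y)"
      by (auto intro!: derivative_eq_intros)
    moreover have "cosh y * cosh y + sinh y * sinh y - 1 = 2 * (sinh y)\<^sup>2"
      using cosh_square_eq[of y] by (simp add: power2_eq_square)
    ultimately show "\<exists>d. ((\<lambda>t. sinh t * cosh t - t) has_real_derivative d) (at y) \<and> 0 < d"
      using \<open>0 < y\<close> by auto
  qed (intro continuous_intros)
  then show ?thesis by simp
qed

lemma mult_cosh_div_sinh_strict_mono:
  fixes a b :: real
  assumes "0 < a" "a < b"
  shows "a * cosh a / sinh a < b * cosh b / sinh b"
proof (rule DERIV_pos_imp_increasing[OF \<open>a < b\<close>])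
  fix x assume "a \<le> x"
  with assms have "0 < x" by simp
  then have "sinh x \<noteq> 0" by simp
  then have "((\<lambda>t. t * cosh t / sinh t) has_real_derivative
      ((1 * cosh x + x * sinh x) * sinh x - x * cosh x * cosh x) / (sinh x * sinh x)) (at x)"
    by (auto intro!: derivative_eq_intros)
  moreover have "(1 * cosh x + x * sinh x) * sinh x - x * cosh x * cosh x = sinh x * cosh x - x"
    using cosh_square_eq[of x] by (simp add: power2_eq_square algebra_simps)
  moreover have "0 < (sinh x * cosh x - x) / (sinh x * sinh x)"
    using less_sinh_mult_cosh[OF \<open>0 < x\<close>] \<open>0 < x\<close> by simp
  ultimately show "\<exists>d. ((\<lambda>t. t * cosh t / sinh t) has_real_derivative d) (at x) \<and> 0 < d"
    by auto
qed

definition clairaut_bound :: "real \<Rightarrow> real \<Rightarrow> real" where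
  "clairaut_bound \<alpha> r = r powr \<alpha> * sinh r"

lemma clairaut_bound_has_derivative:
  assumes "0 < r"
  shows "(clairaut_bound \<alpha> has_real_derivative r powr (\<alpha> - 1) * (\<alpha> * sinh r + r * cosh r)) (at r)"
proof -
  have "(clairaut_bound \<alpha> has_real_derivative \<alpha> * r powr (\<alpha> - 1) * sinh r + r powr \<alpha> * cosh r) (at r)"
    unfolding clairaut_bound_def [abs_def] using assms by (auto intro!: derivative_eq_intros)
  moreover have "r powr \<alpha> = r powr (\<alpha> - 1) * r"
    using assms by (simp add: powr_diff)
  ultimately show ?thesis by (simp add: algebra_simps)
qed

lemma clairaut_bound_dips_between_equal_values:
  assumes "0 < a" "a < b" "clairaut_bound \<alpha> a = clairaut_bound \<alpha> b"
  shows "\<exists>c. a < c \<and> c < b \<and> clairaut_bound \<alpha> c < clairaut_bound \<alpha> a"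
proof -
  have "(clairaut_bound \<alpha> has_real_derivative x powr (\<alpha> - 1) * (\<alpha> * sinh x + x * cosh x)) (at x)"
    if "a \<le> x" for x
    using clairaut_bound_has_derivative \<open>0 < a\<close> that by simp
  then obtain c where c: "a < c" "c < b"
    and "clairaut_bound \<alpha> b - clairaut_bound \<alpha> a
           = (b - a) * (c powr (\<alpha> - 1) * (\<alpha> * sinh c + c * cosh c))"
    using MVT2[OF \<open>a < b\<close>, of "clairaut_bound \<alpha>"
        "\<lambda>x. x powr (\<alpha> - 1) * (\<alpha> * sinh x + x * cosh x)"] by blast
  with assms have "\<alpha> * sinh c + c * cosh c = 0" by simp
  with c \<open>0 < a\<close> have \<alpha>: "\<alpha> = - (c * cosh c / sinh c)"
    by (simp add: field_simps add_eq_0_iff)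
  have "clairaut_bound \<alpha> c < clairaut_bound \<alpha> a"
  proof (rule DERIV_neg_imp_decreasing_open[OF \<open>a < c\<close>])
    fix y assume y: "a < y" "y < c"
    with \<open>0 < a\<close> have "0 < y" by simp
    have "\<alpha> + y * cosh y / sinh y < 0"
      using mult_cosh_div_sinh_strict_mono[OF \<open>0 < y\<close> \<open>y < c\<close>] \<alpha> by simp
    then have "(\<alpha> + y * cosh y / sinh y) * sinh y < 0"
      using \<open>0 < y\<close> by (simp add: mult_neg_pos)
    then have "\<alpha> * sinh y + y * cosh y < 0"
      using \<open>0 < y\<close> by (simp add: algebra_simps)
    then have "y powr (\<alpha> - 1) * (\<alpha> * sinh y + y * cosh y) < 0"
      using \<open>0 < y\<close> by (simp add: mult_pos_neg)
    then show "\<exists>d. (clairaut_bound \<alpha> has_real_derivative d) (at y) \<and> d < 0"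
      using clairaut_bound_has_derivative[OF \<open>0 < y\<close>] by blast
  next
    show "continuous_on {a..c} (clairaut_bound \<alpha>)"
      using clairaut_bound_has_derivative \<open>0 < a\<close>
      by (intro DERIV_atLeastAtMost_imp_continuous_on) (meson order_less_le_trans)
  qed
  with c show ?thesis by blast
qed

text \<open>The angular momentum dL/dv' of the Lagrangian of E_\<alpha>, written in the polar data
  r = u t, r' = u' t, \<theta>' = v' t.\<close>
definition clairaut_quotient :: "real \<Rightarrow> real \<Rightarrow> real \<Rightarrow> real \<Rightarrow> real" where
  "clairaut_quotient \<alpha> r r' \<theta>' = r powr \<alpha> * (sinh r)\<^sup>2 * \<theta>' / sqrt (r'\<^sup>2 + (sinh r)\<^sup>2 * \<theta>'\<^sup>2)"

lemma abs_clairaut_quotient: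
  assumes "0 < r"
  shows "\<bar>clairaut_quotient \<alpha> r r' \<theta>'\<bar>
           = clairaut_bound \<alpha> r * (\<bar>sinh r * \<theta>'\<bar> / sqrt (r'\<^sup>2 + (sinh r * \<theta>')\<^sup>2))"
  using assms unfolding clairaut_quotient_def clairaut_bound_def
  by (simp add: power_mult_distrib abs_mult power2_eq_square[of "sinh r"])

lemma abs_clairaut_quotient_le:
  assumes "0 < r"
  shows "\<bar>clairaut_quotient \<alpha> r r' \<theta>'\<bar> \<le> clairaut_bound \<alpha> r"
proof -
  have "\<bar>sinh r * \<theta>'\<bar> \<le> sqrt (r'\<^sup>2 + (sinh r * \<theta>')\<^sup>2)"
    by (metis real_sqrt_abs real_sqrt_le_mono le_add_same_cancel2 zero_le_power2)
  then have "\<bar>sinh r * \<theta>'\<bar> / sqrt (r'\<^sup>2 + (sinh r * \<theta>')\<^sup>2) \<le> 1"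
    by (auto simp: divide_le_eq_1 sum_power2_gt_zero_iff)
  moreover have "0 \<le> clairaut_bound \<alpha> r"
    using assms by (simp add: clairaut_bound_def)
  ultimately show ?thesis
    unfolding abs_clairaut_quotient[OF assms] by (rule mult_left_le)
qed

lemma abs_clairaut_quotient_radial_zero:
  assumes "0 < r" "\<theta>' \<noteq> 0"
  shows "\<bar>clairaut_quotient \<alpha> r 0 \<theta>'\<bar> = clairaut_bound \<alpha> r"
  using abs_clairaut_quotient[OF assms(1)] assms by simp

lemma alpha_stationary_clairaut_quotient_const:
  assumes "alpha_stationary \<alpha> u v u' v'"
  shows "clairaut_quotient \<alpha> (u s) (u' s) (v' s) = clairaut_quotient \<alpha> (u t) (u' t) (v' t)"
proof -
  have "\<forall>x. ((\<lambda>t. clairaut_quotient \<alpha> (u t) (u' t) (v' t)) has_real_derivative 0) (at x)"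
    using assms by (simp add: alpha_stationary_def clairaut_quotient_def speed2_def)
  then show ?thesis by (rule DERIV_isconst_all)
qed

lemma periodic_shift_int:
  fixes f :: "real \<Rightarrow> 'a"
  assumes per: "\<And>t. f (t + T) = f t"
  shows "f (t + of_int n * T) = f t"
proof (induction n rule: int_induct[where k = 0])
  case (step1 i)
  then show ?case using per[of "t + of_int i * T"] by (simp add: algebra_simps)
next
  case (step2 i)
  then show ?case using per[of "t + of_int (i - 1) * T"] by (simp add: algebra_simps)
qed simp

lemma periodic_range_eq:
  fixes f :: "real \<Rightarrow> 'a"
  assumes "0 < T" and per: "\<And>t. f (t + T) = f t"
  shows "range f = f ` {0..T}"
proof -
  have "f s \<in> f ` {0..T}" for s
  proof
    let ?n = "\<lfloor>s / T\<rfloor>"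
    show "f s = f (s - of_int ?n * T)"
      using periodic_shift_int[where f = f, OF per, of "s - of_int ?n * T" ?n] by simp
    have "of_int ?n * T \<le> s" "s \<le> (of_int ?n + 1) * T"
      using \<open>0 < T\<close> floor_divide_lower[of T s] floor_divide_upper[of T s]
      by (simp_all add: mult.commute less_imp_le)
    then show "s - of_int ?n * T \<in> {0..T}" by (simp add: algebra_simps)
  qed
  then show ?thesis by blast
qed

lemma periodic_continuous_compact_range:
  fixes f :: "real \<Rightarrow> 'a::topological_space"
  assumes "0 < T" "\<And>t. f (t + T) = f t" "continuous_on UNIV f"
  shows "compact (range f)"
  unfolding periodic_range_eq[where f = f, OF assms(1,2)]
  using continuous_on_subset[OF assms(3)] by (intro compact_continuous_image compact_Icc) auto

lemma closed_polar_curve_radius_periodic: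
  assumes "closed_polar_curve u v" and pos: "\<And>t. 0 < u t"
  obtains T where "0 < T" "\<And>t. u (t + T) = u t"
proof -
  obtain T where "0 < T" and per: "\<And>t. Psi (u (t + T)) (v (t + T)) = Psi (u t) (v t)"
    using assms(1) unfolding closed_polar_curve_def by blast
  have "u (t + T) = u t" for t
    using per[of t] pos[of t] pos[of "t + T"] by (simp add: Psi_def)
  with \<open>0 < T\<close> that show thesis by blast
qed

lemma continuous_dips_below_clairaut_bound:
  fixes u :: "real \<Rightarrow> real"
  assumes "continuous_on UNIV u" "0 < u t\<^sub>1" "u t\<^sub>1 < u t\<^sub>2"
    and "clairaut_bound \<alpha> (u t\<^sub>1) = clairaut_bound \<alpha> (u t\<^sub>2)"
  shows "\<exists>t. clairaut_bound \<alpha> (u t) < clairaut_bound \<alpha> (u t\<^sub>1)"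
proof -
  obtain c where c: "u t\<^sub>1 < c" "c < u t\<^sub>2" "clairaut_bound \<alpha> c < clairaut_bound \<alpha> (u t\<^sub>1)"
    using clairaut_bound_dips_between_equal_values[OF assms(2-4)] by blast
  have "connected (range u)"
    using assms(1) by (intro connected_continuous_image) simp_all
  then have "c \<in> range u"
    by (rule connectedD_interval[of _ "u t\<^sub>1" "u t\<^sub>2"]) (use c in auto)
  with c show ?thesis by auto
qed

lemma alpha_stationary_clairaut_level:
  assumes "regular_polar_curve u v u' v' u'' v''" "alpha_stationary \<alpha> u v u' v'"
  obtains c where "\<And>t. c \<le> clairaut_bound \<alpha> (u t)"
    and "\<And>t. u' t = 0 \<Longrightarrow> clairaut_bound \<alpha> (u t) = c"
proof -
  have pos: "\<And>t. 0 < u t" and speed: "\<And>t. 0 < speed2 u u' v' t"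
    using assms(1) unfolding regular_polar_curve_def by auto
  define C where "C s = clairaut_quotient \<alpha> (u s) (u' s) (v' s)" for s
  have C_const: "C t = C 0" for t
    unfolding C_def by (rule alpha_stationary_clairaut_quotient_const[OF assms(2)])
  have "\<bar>C 0\<bar> \<le> clairaut_bound \<alpha> (u t)" for t
    using abs_clairaut_quotient_le[OF pos[of t], of \<alpha> "u' t" "v' t"] C_const[of t]
    unfolding C_def by simp
  moreover have "clairaut_bound \<alpha> (u t) = \<bar>C 0\<bar>" if "u' t = 0" for t
  proof -
    from speed[of t] that have "v' t \<noteq> 0"
      by (cases "v' t = 0") (simp_all add: speed2_def)
    with that show ?thesis
      using abs_clairaut_quotient_radial_zero[OF pos[of t], of "v' t" \<alpha>] C_const[of t]
      unfolding C_def by simp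
  qed
  ultimately show thesis by (rule that)
qed

theorem theorem2p7:
  fixes \<alpha> :: real and u v u' v' u'' v'' :: "real \<Rightarrow> real"
  assumes "\<alpha> \<noteq> 0"
    and "regular_polar_curve u v u' v' u'' v''"
    and "closed_polar_curve u v"
    and "alpha_stationary \<alpha> u v u' v'"
  shows "\<exists>r>0. \<forall>t. u t = r"
proof -
  have du: "\<And>t. (u has_real_derivative u' t) (at t)" and pos: "\<And>t. 0 < u t"
    using assms(2) unfolding regular_polar_curve_def by auto
  have cont: "continuous_on UNIV u"
    using du by (intro continuous_at_imp_continuous_on) (blast intro: DERIV_isCont)
  obtain T where "0 < T" and per: "\<And>t. u (t + T) = u t"
    using closed_polar_curve_radius_periodic[OF assms(3) pos] by blast
  have "compact (range u)"
    using periodic_continuous_compact_range[OF \<open>0 < T\<close> per cont] .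
  then obtain tm tM where min: "\<And>s. u tm \<le> u s" and max: "\<And>s. u s \<le> u tM"
    using compact_attains_inf[of "range u"] compact_attains_sup[of "range u"] by auto
  obtain c where above: "\<And>t. c \<le> clairaut_bound \<alpha> (u t)"
    and turning: "\<And>t. u' t = 0 \<Longrightarrow> clairaut_bound \<alpha> (u t) = c"
    using alpha_stationary_clairaut_level[OF assms(2,4)] by blast
  have "u' tm = 0" by (rule DERIV_local_min[OF du zero_less_one]) (use min in auto)
  moreover have "u' tM = 0" by (rule DERIV_local_max[OF du zero_less_one]) (use max in auto)
  ultimately have level: "clairaut_bound \<alpha> (u tm) = c" "clairaut_bound \<alpha> (u tM) = c"
    using turning by simp_all
  have "u tm = u tM"
  proof (rule ccontr)
    assume "u tm \<noteq> u tM"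
    with min[of tM] have "u tm < u tM" by simp
    with continuous_dips_below_clairaut_bound[OF cont pos] level
    obtain t where "clairaut_bound \<alpha> (u t) < c" by metis
    with above[of t] show False by simp
  qed
  with min max have "u t = u tm" for t
    by (metis order_antisym)
  with pos show ?thesis by blast
qed

end
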